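(* Consider the setting in the context. For integers $m\ge1$ and $T>m$, define the event $$\mathcal E_2=\Big\{\frac1m\sum_{s=1}^m z_{km+s}z_{km+s}^\top\succeq a_1^2I_{n_z}\ \text{ for all } 0\le k\le\lceil T/m\rceil-1\Big\}.$$ Then $$\mathbb P(\mathcal E_2^c)\le 544\,\frac{T}{m}\,n_z^{2.5}\log(a_2n_z)\,a_2^{n_z}\exp(-a_3m).$$
   Context: Unknown linear system $x_{t+1}=A^*x_t+B^*u_t+w_t$ with $x_t\in\mathbb R^{n_x}$, $u_t\in\mathbb R^{n_u}$; $n_z=n_x+n_u$, $z_t=(x_t^\top,u_t^\top)^\top$. Assumption A2: with $\mathcal F_t=\sigma(w_0,\dots,w_{t-1},z_0,\dots,z_t)$, $(z_t)$ is adapted and for some $\sigma_z>0$, $p_z\in(0,1]$: for every unit $\lambda\in\mathbb R^{n_z}$ and every $t\ge0$, $\mathbb P(|\lambda^\top z_{t+1}|\ge\sigma_z\mid\mathcal F_t)\ge p_z$ a.s.; and there is $b_z\ge0$ with $\|z_t\|_2\le b_z$ a.s. for all $t$. (Also standing: $\|w_t\|_\infty\le w_{\max}$, $w_t$ i.i.d., zero mean, positive definite covariance.) Constants: $a_1=\sigma_zp_z/4$, $a_2=64b_z^2/(\sigma_z^2p_z^2)$, $a_3=p_z^2/8$. $A\succeq B$ means $A-B$ is positive semidefinite. *)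

theory Defs
  imports "HOL-Probability.Probability"
begin

text \<open>Stacked vector z = (x, u) indexed by the disjoint sum of the index types,
  so that n_z = CARD('nx + 'nu) = n_x + n_u.\<close>
definition stack :: "real^'nx \<Rightarrow> real^'nu \<Rightarrow> real^('nx + 'nu)" where
  "stack x u = (\<chi> i. case i of Inl a \<Rightarrow> x $ a | Inr b \<Rightarrow> u $ b)"

definition outer :: "real^'n \<Rightarrow> real^'n^'n" where
  "outer v = (\<chi> i j. v $ i * v $ j)"

definition psd :: "real^'n^'n \<Rightarrow> bool" where
  "psd A \<longleftrightarrow> (\<forall>v. 0 \<le> v \<bullet> (A *v v))"

definition pos_def :: "real^'n^'n \<Rightarrow> bool" where
  "pos_def A \<longleftrightarrow> (\<forall>v. v \<noteq> 0 \<longrightarrow> 0 < v \<bullet> (A *v v))"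

definition loewner_ge :: "real^'n^'n \<Rightarrow> real^'n^'n \<Rightarrow> bool" where
  "loewner_ge A B \<longleftrightarrow> psd (A - B)"

definition filt :: "'a measure \<Rightarrow> (nat \<Rightarrow> 'a \<Rightarrow> real^'nx) \<Rightarrow> (nat \<Rightarrow> 'a \<Rightarrow> real^'nz)
    \<Rightarrow> nat \<Rightarrow> 'a measure" where
  "filt M w z t = sigma (space M)
     ({w s -` B \<inter> space M | s B. s < t \<and> B \<in> sets borel} \<union>
      {z s -` B \<inter> space M | s B. s \<le> t \<and> B \<in> sets borel})"

definition const_a1 :: "real \<Rightarrow> real \<Rightarrow> real" where
  "const_a1 \<sigma>z pz = \<sigma>z * pz / 4"
definition const_a2 :: "real \<Rightarrow> real \<Rightarrow> real \<Rightarrow> real" where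
  "const_a2 \<sigma>z pz bz = 64 * bz^2 / (\<sigma>z^2 * pz^2)"
definition const_a3 :: "real \<Rightarrow> real" where
  "const_a3 pz = pz^2 / 8"

end

theory Submission
  imports Defs
begin

(*
  Fix a unit direction l and call step t a hit if |l . z (t+1)| >= sigma_z.  Given the
  past, a hit has probability at least p_z, so peeling off one conditional expectation at
  a time gives E exp(-#hits in a block of m steps) <= (1 - (1 - 1/e) p_z)^m, and Markov's
  inequality bounds the probability of fewer than p_z m / 4 hits by exp(-p_z m / 8).
  Every unit vector u lies within sigma_z / (2 b_z) of some direction of a finite net of
  the unit sphere, and a hit of that direction at a step with |z| <= b_z makes
  (u . z)^2 >= sigma_z^2 / 4; so if all net directions are hit often enough in every block,
  each block Gram matrix dominates (sigma_z p_z / 4)^2 I, and a union bound over blocks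
  and net directions gives the estimate.  Excitation of the coordinate directions forces
  n_z sigma_z^2 p_z <= b_z^2, which bounds the size of a grid-based net by a_2^n_z.
*)

lemma vec_nth_measurable[measurable]:
  fixes f :: "'a \<Rightarrow> real^'n"
  assumes [measurable]: "f \<in> borel_measurable M"
  shows "(\<lambda>\<omega>. f \<omega> $ i) \<in> borel_measurable M"
proof -
  have "(\<lambda>\<omega>. f \<omega> $ i) = (\<lambda>\<omega>. f \<omega> \<bullet> axis i 1)" by (simp add: inner_axis)
  then show ?thesis by simp
qed

lemma stack_measurable[measurable]:
  fixes f :: "'a \<Rightarrow> real^'nx" and g :: "'a \<Rightarrow> real^'nu"
  assumes [measurable]: "f \<in> borel_measurable M" "g \<in> borel_measurable M"
  shows "(\<lambda>\<omega>. stack (f \<omega>) (g \<omega>)) \<in> borel_measurable M"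
proof (subst borel_measurable_euclidean_space, intro ballI)
  fix e :: "real^('nx + 'nu)" assume "e \<in> Basis"
  then obtain j where j: "e = axis j 1" using axis_inverse by blast
  show "(\<lambda>\<omega>. stack (f \<omega>) (g \<omega>) \<bullet> e) \<in> borel_measurable M"
    by (cases j) (simp_all add: j stack_def inner_axis)
qed

lemma space_filt[simp]: "space (filt M w z t) = space M"
  unfolding filt_def by (simp add: space_measure_of_conv)

lemma sets_filt: "sets (filt M w z t) = sigma_sets (space M)
     ({w s -` B \<inter> space M | s B. s < t \<and> B \<in> sets borel} \<union>
      {z s -` B \<inter> space M | s B. s \<le> t \<and> B \<in> sets borel})"
  unfolding filt_def by (rule sets_measure_of) auto

lemma measurable_filt_z:
  fixes z :: "nat \<Rightarrow> 'a \<Rightarrow> real^'nz"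
  assumes "s \<le> t"
  shows "z s \<in> borel_measurable (filt M w z t)"
proof (rule measurableI)
  fix B :: "(real^'nz) set" assume "B \<in> sets borel"
  then show "z s -` B \<inter> space (filt M w z t) \<in> sets (filt M w z t)"
    unfolding sets_filt space_filt using assms by (intro sigma_sets.Basic) blast
qed auto

lemma sigma_finite_subalgebra_filt:
  assumes "prob_space M" "\<And>s. w s \<in> borel_measurable M" "\<And>s. z s \<in> borel_measurable M"
  shows "sigma_finite_subalgebra M (filt M w z t)"
proof -
  interpret prob_space M by fact
  have "sets (filt M w z t) \<subseteq> sets M"
    unfolding sets_filt
    by (rule sets.sigma_sets_subset) (auto intro: measurable_sets assms)
  then have "finite_measure_subalgebra M (filt M w z t)"
    by unfold_locales (auto simp: subalgebra_def)
  then show ?thesis using finite_measure_subalgebra_is_sigma_finite by blast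
qed

lemma outer_mult_vec: "outer a *v v = (a \<bullet> v) *\<^sub>R a"
  by (simp add: outer_def matrix_vector_mult_def vec_eq_iff inner_vec_def sum_distrib_left mult_ac)

lemma sum_matrix_vector_mult:
  fixes F :: "'i \<Rightarrow> real^'n^'m"
  shows "finite A \<Longrightarrow> (\<Sum>s\<in>A. F s) *v v = (\<Sum>s\<in>A. F s *v v)"
  by (induct rule: finite_induct) (auto simp: matrix_vector_mult_add_rdistrib)

lemma inner_sum_outer_mult_vec:
  fixes f :: "'i \<Rightarrow> real^'n"
  assumes "finite A"
  shows "v \<bullet> ((\<Sum>s\<in>A. outer (f s)) *v v) = (\<Sum>s\<in>A. (f s \<bullet> v)\<^sup>2)"
  by (simp add: sum_matrix_vector_mult[OF assms] outer_mult_vec inner_sum_right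
      power2_eq_square inner_commute)

lemma loewner_ge_scaled_identityI:
  fixes S :: "real^'n^'n"
  assumes unit: "\<And>u. norm u = 1 \<Longrightarrow> c \<le> u \<bullet> (S *v u)"
  shows "loewner_ge S (c *\<^sub>R mat 1)"
  unfolding loewner_ge_def psd_def
proof
  fix v :: "real^'n"
  have "c * (v \<bullet> v) \<le> v \<bullet> (S *v v)"
  proof (cases "v = 0")
    case False
    define u where "u = (1 / norm v) *\<^sub>R v"
    have "v = norm v *\<^sub>R u" using False by (simp add: u_def)
    then have "v \<bullet> (S *v v) = (norm v)\<^sup>2 * (u \<bullet> (S *v u))"
      by (metis inner_scaleR_left inner_scaleR_right matrix_vector_mult_scaleR
          mult.assoc power2_eq_square)
    moreover have "norm u = 1" using False by (simp add: u_def)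
    then have "c * (norm v)\<^sup>2 \<le> (u \<bullet> (S *v u)) * (norm v)\<^sup>2"
      by (intro mult_right_mono unit) auto
    ultimately show ?thesis by (simp add: power2_norm_eq_inner mult.commute)
  qed simp
  moreover have "(S - c *\<^sub>R mat 1) *v v = S *v v - c *\<^sub>R v"
    by (simp add: matrix_vector_mult_diff_rdistrib scaleR_matrix_vector_assoc[symmetric])
  ultimately show "0 \<le> v \<bullet> ((S - c *\<^sub>R mat 1) *v v)"
    by (simp add: inner_diff_right)
qed

lemma half_le_abs_inner_of_near:
  fixes x u l :: "'a::real_inner"
  assumes near: "norm (u - l) \<le> \<sigma> / (2 * b)" and x: "norm x \<le> b" and b: "b > 0"
    and hit: "\<sigma> \<le> \<bar>l \<bullet> x\<bar>"
  shows "\<sigma> / 2 \<le> \<bar>x \<bullet> u\<bar>"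
proof -
  have "\<bar>x \<bullet> (u - l)\<bar> \<le> norm x * norm (u - l)" by (rule Cauchy_Schwarz_ineq2)
  also have "\<dots> \<le> b * (\<sigma> / (2 * b))" using x near b by (intro mult_mono) auto
  also have "\<dots> = \<sigma> / 2" using b by simp
  finally have "\<bar>x \<bullet> u - x \<bullet> l\<bar> \<le> \<sigma> / 2" by (simp add: inner_diff_right)
  then show ?thesis using hit by (simp add: inner_commute) argo
qed

lemma loewner_ge_block_of_net:
  fixes f :: "nat \<Rightarrow> real^'n"
  assumes m: "m \<ge> 1" and bnd: "\<And>s. s \<in> {1..m} \<Longrightarrow> norm (f s) \<le> b"
    and \<sigma>: "\<sigma> > 0" and b: "b > 0" and p: "0 \<le> p" "p \<le> 1"
    and net: "\<And>u. norm u = 1 \<Longrightarrow> \<exists>l. norm (u - l) \<le> \<sigma> / (2 * b) \<and>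
                 p * m / 4 \<le> card {s \<in> {1..m}. \<sigma> \<le> \<bar>l \<bullet> f s\<bar>}"
  shows "loewner_ge ((1 / real m) *\<^sub>R (\<Sum>s = 1..m. outer (f s))) ((\<sigma> * p / 4)\<^sup>2 *\<^sub>R mat 1)"
proof (rule loewner_ge_scaled_identityI)
  fix u :: "real^'n" assume "norm u = 1"
  then obtain l where near: "norm (u - l) \<le> \<sigma> / (2 * b)"
    and many: "p * m / 4 \<le> card {s \<in> {1..m}. \<sigma> \<le> \<bar>l \<bullet> f s\<bar>}"
    using net by blast
  define E where "E = {s \<in> {1..m}. \<sigma> \<le> \<bar>l \<bullet> f s\<bar>}"
  have "p\<^sup>2 \<le> p" using p by (simp add: power2_eq_square mult_left_le)
  then have "(\<sigma> * p / 4)\<^sup>2 \<le> \<sigma>\<^sup>2 * p / 16"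
    by (simp add: power_mult_distrib power_divide mult_left_mono)
  also have "\<dots> = (1 / real m) * ((p * m / 4) * (\<sigma> / 2)\<^sup>2)"
    using m by (simp add: power2_eq_square)
  also have "\<dots> \<le> (1 / real m) * (card E * (\<sigma> / 2)\<^sup>2)"
    using many by (intro mult_left_mono mult_right_mono) (auto simp: E_def)
  also have "\<dots> \<le> (1 / real m) * (\<Sum>s\<in>E. (f s \<bullet> u)\<^sup>2)"
  proof -
    have "(\<sigma> / 2)\<^sup>2 \<le> (f s \<bullet> u)\<^sup>2" if "s \<in> E" for s
    proof -
      have "\<sigma> / 2 \<le> \<bar>f s \<bullet> u\<bar>"
        using half_le_abs_inner_of_near[OF near bnd b] that by (auto simp: E_def)
      then show ?thesis using power_mono[of "\<sigma> / 2" "\<bar>f s \<bullet> u\<bar>" 2] \<sigma> by simp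
    qed
    then show ?thesis by (intro mult_left_mono sum_bounded_below[where K="(\<sigma> / 2)\<^sup>2", simplified]) auto
  qed
  also have "\<dots> \<le> (1 / real m) * (\<Sum>s\<in>{1..m}. (f s \<bullet> u)\<^sup>2)"
    by (intro mult_left_mono sum_mono2) (auto simp: E_def)
  also have "\<dots> = u \<bullet> (((1 / real m) *\<^sub>R (\<Sum>s = 1..m. outer (f s))) *v u)"
    by (simp add: scaleR_matrix_vector_assoc[symmetric] inner_sum_outer_mult_vec)
  finally show "(\<sigma> * p / 4)\<^sup>2 \<le> u \<bullet> (((1 / real m) *\<^sub>R (\<Sum>s = 1..m. outer (f s))) *v u)" .
qed

lemma norm_vec_power2: "(norm x)\<^sup>2 = (\<Sum>i\<in>UNIV. (x $ i)\<^sup>2)"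
  for x :: "real^'n"
  unfolding power2_norm_eq_inner by (simp add: inner_vec_def power2_eq_square)

lemma norm_vec_le_sqrt_card:
  fixes x :: "real^'n"
  assumes "\<And>i. \<bar>x $ i\<bar> \<le> r"
  shows "norm x \<le> r * sqrt (real CARD('n))"
proof -
  have "(norm x)\<^sup>2 = (\<Sum>i\<in>UNIV. (x $ i)\<^sup>2)" by (rule norm_vec_power2)
  also have "\<dots> \<le> (\<Sum>i\<in>(UNIV::'n set). r\<^sup>2)"
  proof (rule sum_mono)
    fix i
    show "(x $ i)\<^sup>2 \<le> r\<^sup>2" using power_mono[OF assms[of i] abs_ge_zero, of 2] by simp
  qed
  also have "\<dots> = (r * sqrt (real CARD('n)))\<^sup>2" by (simp add: power_mult_distrib)
  finally have "(norm x)\<^sup>2 \<le> (r * sqrt (real CARD('n)))\<^sup>2" .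
  moreover have "0 \<le> r * sqrt (real CARD('n))"
    using assms[of undefined] abs_ge_zero[of "x $ undefined"] by simp
  ultimately show ?thesis by (rule power2_le_imp_le)
qed

lemma exists_grid_point_near:
  fixes v :: "real^'n"
  assumes v: "norm v \<le> 1" and h: "h > 0"
  shows "\<exists>j \<in> Pi\<^sub>E UNIV (\<lambda>_. {-\<lceil>1/h\<rceil>..\<lceil>1/h\<rceil>}).
           norm (v - (\<chi> i. h * of_int (j i))) \<le> h * sqrt (real CARD('n)) / 2"
proof
  define j where "j i = round (v $ i / h)" for i
  have round: "\<bar>of_int (j i) - v $ i / h\<bar> \<le> 1/2" for i
    unfolding j_def by (rule of_int_round_abs_le)
  have "\<bar>j i\<bar> \<le> \<lceil>1/h\<rceil>" for i
  proof -
    have "\<bar>v $ i / h\<bar> \<le> 1 / h"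
      using component_le_norm_cart[of v i] v h by (simp add: abs_div divide_right_mono)
    then have "\<bar>real_of_int (j i)\<bar> < real_of_int \<lceil>1/h\<rceil> + 1"
      using round[of i] le_of_int_ceiling[of "1/h"] by linarith
    then have "real_of_int \<bar>j i\<bar> < real_of_int (\<lceil>1/h\<rceil> + 1)" by simp
    then show ?thesis by (simp only: of_int_less_iff)
  qed
  then show "j \<in> Pi\<^sub>E UNIV (\<lambda>_. {-\<lceil>1/h\<rceil>..\<lceil>1/h\<rceil>})"
    by (auto simp: abs_le_iff minus_le_iff)
  have "\<bar>(v - (\<chi> i. h * of_int (j i))) $ i\<bar> \<le> h / 2" for i
  proof -
    have "(v - (\<chi> i. h * of_int (j i))) $ i = - h * (of_int (j i) - v $ i / h)"
      using h by (simp add: field_simps)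
    then have "\<bar>(v - (\<chi> i. h * of_int (j i))) $ i\<bar> = h * \<bar>of_int (j i) - v $ i / h\<bar>"
      using h by (simp add: abs_mult)
    then show ?thesis using round[of i] h by simp
  qed
  then have "norm (v - (\<chi> i. h * of_int (j i))) \<le> h / 2 * sqrt (real CARD('n))"
    by (rule norm_vec_le_sqrt_card)
  then show "norm (v - (\<chi> i. h * of_int (j i))) \<le> h * sqrt (real CARD('n)) / 2"
    by simp
qed

lemma exists_unit_sphere_net:
  assumes \<epsilon>: "\<epsilon> > 0"
  shows "\<exists>L :: (real^'n) set. finite L \<and> (\<forall>l\<in>L. norm l = 1) \<and>
           real (card L) \<le> (2 * of_int \<lceil>sqrt (real CARD('n)) / \<epsilon>\<rceil> + 1) ^ CARD('n) \<and>
           (\<forall>v. norm v = 1 \<longrightarrow> (\<exists>l\<in>L. norm (v - l) \<le> \<epsilon>))"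
proof -
  define h where "h = \<epsilon> / sqrt (real CARD('n))"
  have h: "h > 0" "1 / h = sqrt (real CARD('n)) / \<epsilon>" "h * sqrt (real CARD('n)) = \<epsilon>"
    using \<epsilon> by (simp_all add: h_def)
  define J where "J = \<lceil>1 / h\<rceil>"
  define I where "I = Pi\<^sub>E (UNIV :: 'n set) (\<lambda>_. {-J..J})"
  define g :: "('n \<Rightarrow> int) \<Rightarrow> real^'n" where "g j = (\<chi> i. h * of_int (j i))" for j
  define near where "near j l \<longleftrightarrow> norm l = 1 \<and> norm (l - g j) \<le> \<epsilon> / 2" for j l
  define L where "L = (\<lambda>j. SOME l. near j l) ` {j \<in> I. \<exists>l. near j l}"
  have finite_I: "finite I" unfolding I_def by (intro finite_PiE) auto
  have "card L \<le> card {j \<in> I. \<exists>l. near j l}"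
    unfolding L_def using finite_I by (intro card_image_le) simp
  also have "\<dots> \<le> card I" using finite_I by (intro card_mono) auto
  finally have "real (card L) \<le> real (card I)" by simp
  also have "\<dots> = (2 * of_int J + 1) ^ CARD('n)"
  proof -
    have "0 \<le> J"
      unfolding J_def using h(1) by (metis ceiling_mono ceiling_zero less_imp_le zero_less_divide_1_iff)
    then show ?thesis by (simp add: I_def card_PiE)
  qed
  finally have card_L: "real (card L) \<le> (2 * of_int \<lceil>sqrt (real CARD('n)) / \<epsilon>\<rceil> + 1) ^ CARD('n)"
    unfolding J_def h(2) .
  have unit: "norm l = 1" if "l \<in> L" for l
  proof -
    from that obtain j where "\<exists>l. near j l" "l = (SOME l. near j l)" unfolding L_def by blast
    then show ?thesis using someI_ex[of "near j"] by (simp add: near_def)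
  qed
  have net: "\<exists>l\<in>L. norm (v - l) \<le> \<epsilon>" if v: "norm v = 1" for v :: "real^'n"
  proof -
    obtain j where j: "j \<in> I" "norm (v - g j) \<le> \<epsilon> / 2"
      using exists_grid_point_near[of v h] v h unfolding I_def g_def J_def by auto
    then have "near j v" by (simp add: near_def v norm_minus_commute)
    define l where "l = (SOME l. near j l)"
    have "near j l" unfolding l_def using \<open>near j v\<close> by (rule someI)
    have "norm (v - l) \<le> norm (v - g j) + norm (l - g j)"
      using norm_triangle_ineq4[of "v - g j" "l - g j"] by simp
    also have "\<dots> \<le> \<epsilon>" using j(2) \<open>near j l\<close> by (simp add: near_def)
    finally have "norm (v - l) \<le> \<epsilon>" .
    moreover have "l \<in> L" unfolding L_def l_def using j(1) \<open>near j v\<close> by blast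
    ultimately show ?thesis by blast
  qed
  moreover have "finite L" unfolding L_def using finite_I by simp
  ultimately show ?thesis using card_L unit by blast
qed

lemma const_a2_ge_64:
  assumes dim: "real n * \<sigma>\<^sup>2 * p \<le> b\<^sup>2" and n: "n \<ge> 1" and \<sigma>: "\<sigma> > 0" and p: "0 < p" "p \<le> 1"
  shows "64 \<le> const_a2 \<sigma> p b"
proof -
  have "p\<^sup>2 * \<sigma>\<^sup>2 \<le> real n * \<sigma>\<^sup>2 * p"
    using n p by (simp add: power2_eq_square mult_mono)
  with dim have "\<sigma>\<^sup>2 * p\<^sup>2 \<le> b\<^sup>2" by (simp add: mult.commute)
  then show ?thesis using \<sigma> p by (simp add: const_a2_def field_simps)
qed

lemma net_size_base_le_const_a2:
  assumes dim: "real n * \<sigma>\<^sup>2 * p \<le> b\<^sup>2" and n: "n \<ge> 1" and \<sigma>: "\<sigma> > 0" and p: "0 < p" "p \<le> 1"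
    and b: "b > 0"
  shows "2 * of_int \<lceil>sqrt (real n) / (\<sigma> / (2 * b))\<rceil> + 1 \<le> const_a2 \<sigma> p b"
proof -
  define \<rho> where "\<rho> = b / \<sigma>"
  have \<rho>: "\<rho> > 0" using b \<sigma> by (simp add: \<rho>_def)
  have a2: "const_a2 \<sigma> p b = 64 * \<rho>\<^sup>2 / p\<^sup>2"
    using \<sigma> by (simp add: const_a2_def \<rho>_def power_divide)
  have np: "real n * p \<le> \<rho>\<^sup>2"
    using dim \<sigma> by (simp add: \<rho>_def field_simps)
  have "p ^ 4 \<le> p" using power_decreasing[of 1 4 p] p by simp
  then have "real n * p ^ 4 \<le> real n * p" by (intro mult_left_mono) auto
  with np have "real n * (p\<^sup>2)\<^sup>2 \<le> \<rho>\<^sup>2" by simp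
  then have "sqrt (real n * (p\<^sup>2)\<^sup>2) \<le> sqrt (\<rho>\<^sup>2)" by (rule real_sqrt_le_mono)
  moreover have "sqrt (p ^ 4) = p\<^sup>2" by (rule real_sqrt_unique) simp_all
  ultimately have "sqrt (real n) * p\<^sup>2 \<le> \<rho>" using \<rho> by (simp add: real_sqrt_mult)
  then have sqrt_n: "\<rho> * sqrt (real n) \<le> \<rho>\<^sup>2 / p\<^sup>2"
    using \<rho> p by (simp add: field_simps power2_eq_square)
  have one: "1 \<le> \<rho>\<^sup>2 / p\<^sup>2"
  proof -
    have "p\<^sup>2 \<le> real n * p" using n p by (simp add: power2_eq_square mult_mono)
    then show ?thesis using np p by simp
  qed
  have "sqrt (real n) / (\<sigma> / (2 * b)) = 2 * \<rho> * sqrt (real n)"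
    using \<sigma> b by (simp add: \<rho>_def)
  then have "2 * of_int \<lceil>sqrt (real n) / (\<sigma> / (2 * b))\<rceil> + 1 \<le> 4 * (\<rho> * sqrt (real n)) + 3"
    by linarith
  also have "\<dots> \<le> 7 * (\<rho>\<^sup>2 / p\<^sup>2)" using sqrt_n one by linarith
  also have "\<dots> \<le> 64 * (\<rho>\<^sup>2 / p\<^sup>2)" using one by linarith
  also have "\<dots> = const_a2 \<sigma> p b" by (simp add: a2)
  finally show ?thesis .
qed

lemma exists_unit_sphere_net_card_le_const_a2:
  assumes dim: "real CARD('n) * \<sigma>\<^sup>2 * p \<le> b\<^sup>2" and \<sigma>: "\<sigma> > 0" and p: "0 < p" "p \<le> 1"
    and b: "b > 0"
  shows "\<exists>L :: (real^'n) set. finite L \<and> (\<forall>l\<in>L. norm l = 1) \<and>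
           real (card L) \<le> const_a2 \<sigma> p b ^ CARD('n) \<and>
           (\<forall>v. norm v = 1 \<longrightarrow> (\<exists>l\<in>L. norm (v - l) \<le> \<sigma> / (2 * b)))"
proof -
  let ?\<epsilon> = "\<sigma> / (2 * b)"
  obtain L :: "(real^'n) set" where L: "finite L" "\<forall>l\<in>L. norm l = 1"
      "real (card L) \<le> (2 * of_int \<lceil>sqrt CARD('n) / ?\<epsilon>\<rceil> + 1) ^ CARD('n)"
      "\<forall>v. norm v = 1 \<longrightarrow> (\<exists>l\<in>L. norm (v - l) \<le> ?\<epsilon>)"
    using exists_unit_sphere_net[of ?\<epsilon>] \<sigma> b by auto
  have "0 \<le> sqrt CARD('n) / ?\<epsilon>" using \<sigma> b by simp
  then have "0 \<le> \<lceil>sqrt CARD('n) / ?\<epsilon>\<rceil>" by (metis ceiling_mono ceiling_zero)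
  then have "(2 * of_int \<lceil>sqrt CARD('n) / ?\<epsilon>\<rceil> + 1) ^ CARD('n) \<le> const_a2 \<sigma> p b ^ CARD('n)"
    using net_size_base_le_const_a2[OF dim _ \<sigma> p b] by (intro power_mono) (auto simp: Suc_le_eq)
  with L show ?thesis by (meson order_trans)
qed

lemma two_le_544_powr_mult_ln:
  fixes n a :: real
  assumes n: "1 \<le> n" and a: "64 \<le> a"
  shows "2 \<le> 544 * n powr 2.5 * ln (a * n)"
proof -
  have "exp 1 \<le> a * n"
    using exp_le a n mult_mono[of 64 a 1 n] by linarith
  then have "1 \<le> ln (a * n)" using a n by (subst ln_ge_iff) auto
  moreover have "1 \<le> n powr 2.5" using n by (intro ge_one_powr_ge_zero) auto
  ultimately have "1 \<le> n powr 2.5 * ln (a * n)" using mult_mono[of 1 _ 1] by fastforce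
  then have "2 \<le> 544 * (n powr 2.5 * ln (a * n))" by linarith
  then show ?thesis by (simp only: mult.assoc)
qed

lemma block_union_bound_le_rate:
  fixes m T n :: nat and a c p :: real
  assumes m: "1 \<le> m" "m < T" and n: "1 \<le> n" and a: "64 \<le> a" and c: "0 \<le> c" "c \<le> a ^ n"
    and p: "0 < p" "p \<le> 1"
  shows "real (Suc (nat \<lceil>real T / real m\<rceil> - 1)) * c * exp (- p * m / 8)
         \<le> 544 * (real T / real m) * real n powr 2.5 * ln (a * real n)
             * a ^ n * exp (- const_a3 p * real m)"
proof -
  have "1 \<le> real T / real m" using m by simp
  then have blocks: "real (Suc (nat \<lceil>real T / real m\<rceil> - 1)) \<le> 2 * (real T / real m)"
    by linarith
  have "real (Suc (nat \<lceil>real T / real m\<rceil> - 1)) * c * exp (- p * m / 8)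
        \<le> 2 * (real T / real m) * a ^ n * exp (- const_a3 p * real m)"
  proof (intro mult_mono blocks c)
    show "exp (- p * m / 8) \<le> exp (- const_a3 p * real m)"
      using p by (simp add: const_a3_def power2_eq_square mult_left_le_one_le)
  qed (use a c in auto)
  also have "\<dots> \<le> 544 * (real T / real m) * real n powr 2.5 * ln (a * real n)
                   * a ^ n * exp (- const_a3 p * real m)"
  proof -
    have "2 * (real T / real m) \<le> 544 * (real T / real m) * real n powr 2.5 * ln (a * real n)"
      using mult_right_mono[OF two_le_544_powr_mult_ln[OF _ a], of n "real T / real m"] n
      by (simp add: mult_ac)
    then show ?thesis using a by (intro mult_right_mono) auto
  qed
  finally show ?thesis .
qed

locale excited_process = prob_space M
  for M :: "'a measure" +
  fixes z :: "nat \<Rightarrow> 'a \<Rightarrow> real^'n" and w :: "nat \<Rightarrow> 'a \<Rightarrow> real^'m" and \<sigma> p :: real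
  assumes z_measurable[measurable]: "\<And>t. z t \<in> borel_measurable M"
    and w_measurable[measurable]: "\<And>t. w t \<in> borel_measurable M"
    and excitation: "\<And>l t. norm (l :: real^'n) = 1 \<Longrightarrow>
        AE \<omega> in M. real_cond_exp M (filt M w z t)
          (indicator {\<omega>' \<in> space M. \<bar>l \<bullet> z (Suc t) \<omega>'\<bar> \<ge> \<sigma>}) \<omega> \<ge> p"
begin

definition hit :: "real^'n \<Rightarrow> nat \<Rightarrow> 'a \<Rightarrow> real" where
  "hit l t = indicator {\<omega> \<in> space M. \<sigma> \<le> \<bar>l \<bullet> z (Suc t) \<omega>\<bar>}"

lemma hit_cases: "hit l t \<omega> = 0 \<or> hit l t \<omega> = 1"
  unfolding hit_def by (simp add: indicator_def)

lemma hit_nonneg: "0 \<le> hit l t \<omega>"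
  unfolding hit_def by simp

lemma hit_measurable[measurable]: "hit l t \<in> borel_measurable M"
  unfolding hit_def by measurable

lemma hit_measurable_filt:
  assumes "Suc t \<le> t'"
  shows "hit l t \<in> borel_measurable (filt M w z t')"
proof -
  have [measurable]: "z (Suc t) \<in> borel_measurable (filt M w z t')"
    by (rule measurable_filt_z[OF assms])
  have "{\<omega> \<in> space (filt M w z t'). \<sigma> \<le> \<bar>l \<bullet> z (Suc t) \<omega>\<bar>} \<in> sets (filt M w z t')"
    by measurable
  then show ?thesis unfolding hit_def space_filt by measurable
qed

lemma sum_hit_eq_card:
  assumes "\<omega> \<in> space M"
  shows "(\<Sum>s<m. hit l (t0 + s) \<omega>) = real (card {s \<in> {1..m}. \<sigma> \<le> \<bar>l \<bullet> z (t0 + s) \<omega>\<bar>})"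
proof -
  have "(\<Sum>s<m. hit l (t0 + s) \<omega>) = (\<Sum>s<m. of_bool (\<sigma> \<le> \<bar>l \<bullet> z (t0 + Suc s) \<omega>\<bar>))"
    using assms by (intro sum.cong) (auto simp: hit_def indicator_def)
  also have "\<dots> = (\<Sum>s\<in>{1..m}. of_bool (\<sigma> \<le> \<bar>l \<bullet> z (t0 + s) \<omega>\<bar>))"
    by (simp only: One_nat_def sum.atLeast1_atMost_eq)
  finally show ?thesis by (simp add: Int_def)
qed

lemma excitation_integral:
  fixes P :: "'a \<Rightarrow> real"
  assumes l: "norm l = 1" and P_filt: "P \<in> borel_measurable (filt M w z t)"
    and P: "\<And>\<omega>. 0 \<le> P \<omega>" "\<And>\<omega>. P \<omega> \<le> 1"
  shows "p * (\<integral>\<omega>. P \<omega> \<partial>M) \<le> (\<integral>\<omega>. P \<omega> * hit l t \<omega> \<partial>M)"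
proof -
  interpret F: sigma_finite_subalgebra M "filt M w z t"
    by (rule sigma_finite_subalgebra_filt) (auto simp: prob_space_axioms)
  have [measurable]: "P \<in> borel_measurable M" by (rule measurable_from_subalg[OF F.subalg P_filt])
  have int_P: "integrable M P"
    by (rule integrable_const_bound[where B=1]) (auto simp: P abs_le_iff intro: order_trans[OF _ P(2)])
  have "\<bar>P \<omega> * hit l t \<omega>\<bar> \<le> 1" for \<omega>
    using hit_cases[of l t \<omega>] P[of \<omega>] by auto
  then have int_P_hit: "integrable M (\<lambda>\<omega>. P \<omega> * hit l t \<omega>)"
    by (intro integrable_const_bound[where B=1]) auto
  note cond_exp = F.real_cond_exp_intg[OF int_P_hit P_filt hit_measurable]
  have "(\<integral>\<omega>. p * P \<omega> \<partial>M) \<le> (\<integral>\<omega>. P \<omega> * real_cond_exp M (filt M w z t) (hit l t) \<omega> \<partial>M)"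
  proof (rule integral_mono_AE)
    show "AE \<omega> in M. p * P \<omega> \<le> P \<omega> * real_cond_exp M (filt M w z t) (hit l t) \<omega>"
      using excitation[OF l, of t] unfolding hit_def
      by eventually_elim (metis P(1) mult.commute mult_right_mono)
  qed (use int_P cond_exp(1) in auto)
  then show ?thesis using cond_exp(2) by simp
qed

lemma prob_hit_ge:
  assumes "norm l = 1"
  shows "p \<le> prob {\<omega> \<in> space M. \<sigma> \<le> \<bar>l \<bullet> z (Suc t) \<omega>\<bar>}"
  using excitation_integral[OF assms, of "\<lambda>_. 1" t] by (simp add: hit_def prob_space)

lemma card_mult_excitation_le_sq_bound:
  assumes \<sigma>: "\<sigma> > 0" and bnd: "AE \<omega> in M. norm (z (Suc t) \<omega>) \<le> b"
  shows "real CARD('n) * \<sigma>\<^sup>2 * p \<le> b\<^sup>2"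
proof -
  have int_sq: "integrable M (\<lambda>\<omega>. (z (Suc t) \<omega> $ i)\<^sup>2)" for i
  proof (rule integrable_const_bound[where B="b\<^sup>2"])
    show "AE \<omega> in M. norm ((z (Suc t) \<omega> $ i)\<^sup>2) \<le> b\<^sup>2"
      using bnd
    proof eventually_elim
      case (elim \<omega>)
      have "\<bar>z (Suc t) \<omega> $ i\<bar> \<le> b"
        using component_le_norm_cart[of "z (Suc t) \<omega>" i] elim by linarith
      then have "\<bar>z (Suc t) \<omega> $ i\<bar>\<^sup>2 \<le> b\<^sup>2" by (intro power_mono) auto
      then show ?case by simp
    qed
  qed measurable
  have "\<sigma>\<^sup>2 * p \<le> (\<integral>\<omega>. (z (Suc t) \<omega> $ i)\<^sup>2 \<partial>M)" for i
  proof -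
    define S where "S = {\<omega> \<in> space M. \<sigma> \<le> \<bar>axis i 1 \<bullet> z (Suc t) \<omega>\<bar>}"
    have S_sets[measurable]: "S \<in> sets M" unfolding S_def by measurable
    have int_S: "integrable M (indicator S :: 'a \<Rightarrow> real)"
      by (rule integrable_const_bound[where B=1]) (auto simp: indicator_def)
    have "\<sigma>\<^sup>2 * p \<le> \<sigma>\<^sup>2 * prob S"
      using prob_hit_ge[of "axis i 1" t] by (intro mult_left_mono) (auto simp: S_def)
    also have "\<dots> = (\<integral>\<omega>. \<sigma>\<^sup>2 * indicator S \<omega> \<partial>M)" by simp
    also have "\<dots> \<le> (\<integral>\<omega>. (z (Suc t) \<omega> $ i)\<^sup>2 \<partial>M)"
    proof (rule integral_mono[OF integrable_mult_right[OF int_S] int_sq])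
      fix \<omega>
      show "\<sigma>\<^sup>2 * indicator S \<omega> \<le> (z (Suc t) \<omega> $ i)\<^sup>2"
        using power_mono[of \<sigma> "\<bar>z (Suc t) \<omega> $ i\<bar>" 2] \<sigma>
        by (auto simp: S_def indicator_def inner_axis')
    qed
    finally show ?thesis .
  qed
  then have "(\<Sum>i\<in>(UNIV :: 'n set). \<sigma>\<^sup>2 * p) \<le> (\<Sum>i\<in>UNIV. \<integral>\<omega>. (z (Suc t) \<omega> $ i)\<^sup>2 \<partial>M)"
    by (rule sum_mono)
  also have "\<dots> = (\<integral>\<omega>. (norm (z (Suc t) \<omega>))\<^sup>2 \<partial>M)"
    using int_sq by (simp add: norm_vec_power2)
  also have "\<dots> \<le> (\<integral>\<omega>. b\<^sup>2 \<partial>M)"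
  proof (rule integral_mono_AE)
    show "integrable M (\<lambda>\<omega>. (norm (z (Suc t) \<omega>))\<^sup>2)"
      unfolding norm_vec_power2 by (intro Bochner_Integration.integrable_sum int_sq)
    show "AE \<omega> in M. (norm (z (Suc t) \<omega>))\<^sup>2 \<le> b\<^sup>2"
      using bnd by eventually_elim (simp add: power_mono)
  qed simp
  finally show ?thesis by (simp add: mult.assoc prob_space)
qed

lemma integral_prod_exp_neg_hit_le:
  assumes l: "norm l = 1" and p: "0 \<le> p" "p \<le> 1"
  shows "(\<integral>\<omega>. (\<Prod>s<j. exp (- hit l (t0 + s) \<omega>)) \<partial>M) \<le> (1 - (1 - exp (-1)) * p) ^ j"
proof (induction j)
  case (Suc j)
  define c where "c = 1 - exp (-1::real)"
  have c: "0 \<le> c" "c \<le> 1" "c * p \<le> 1" using p by (auto simp: c_def mult_le_one)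
  define P where "P \<omega> = (\<Prod>s<j. exp (- hit l (t0 + s) \<omega>))" for \<omega>
  have exp_hit: "exp (- hit l t \<omega>) = 1 - c * hit l t \<omega>" for t \<omega>
    using hit_cases[of l t \<omega>] by (auto simp: c_def)
  have exp_neg_hit_le_1: "exp (- hit l t \<omega>) \<le> 1" for t \<omega>
    using hit_nonneg[of l t \<omega>] by simp
  have "(\<lambda>\<omega>. exp (- hit l (t0 + s) \<omega>)) \<in> borel_measurable (filt M w z (t0 + j))" if "s < j" for s
  proof -
    have [measurable]: "hit l (t0 + s) \<in> borel_measurable (filt M w z (t0 + j))"
      by (rule hit_measurable_filt) (use that in simp)
    show ?thesis by measurable
  qed
  then have P_filt: "P \<in> borel_measurable (filt M w z (t0 + j))"
    unfolding P_def by (intro borel_measurable_prod) auto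
  have [measurable]: "P \<in> borel_measurable M" unfolding P_def by measurable
  have P: "0 \<le> P \<omega>" "P \<omega> \<le> 1" for \<omega>
    unfolding P_def by (auto intro: prod_nonneg prod_le_1 exp_neg_hit_le_1)
  have int_P: "integrable M P"
    by (rule integrable_const_bound[where B=1]) (use P in \<open>auto simp: abs_le_iff\<close>)
  have "\<bar>P \<omega> * hit l (t0 + j) \<omega>\<bar> \<le> 1" for \<omega>
    using hit_cases[of l "t0 + j" \<omega>] P[of \<omega>] by auto
  then have int_P_hit: "integrable M (\<lambda>\<omega>. P \<omega> * hit l (t0 + j) \<omega>)"
    by (intro integrable_const_bound[where B=1]) auto
  have "(\<integral>\<omega>. (\<Prod>s<Suc j. exp (- hit l (t0 + s) \<omega>)) \<partial>M)
      = (\<integral>\<omega>. P \<omega> - c * (P \<omega> * hit l (t0 + j) \<omega>) \<partial>M)"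
    by (simp add: P_def exp_hit algebra_simps)
  also have "\<dots> = (\<integral>\<omega>. P \<omega> \<partial>M) - c * (\<integral>\<omega>. P \<omega> * hit l (t0 + j) \<omega> \<partial>M)"
    using int_P int_P_hit by simp
  \<comment> \<open>P only depends on the hits before time t0 + j, so the excitation condition applies\<close>
  also have "\<dots> \<le> (\<integral>\<omega>. P \<omega> \<partial>M) - c * (p * (\<integral>\<omega>. P \<omega> \<partial>M))"
    using excitation_integral[OF l P_filt P] c by (intro diff_left_mono mult_left_mono) auto
  also have "\<dots> = (1 - c * p) * (\<integral>\<omega>. P \<omega> \<partial>M)" by (simp add: algebra_simps)
  also have "\<dots> \<le> (1 - c * p) * (1 - c * p) ^ j"
    using Suc.IH c by (intro mult_left_mono) (auto simp: P_def c_def)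
  finally show ?case by (simp add: c_def)
qed simp

lemma prob_few_hits_le:
  assumes l: "norm l = 1" and p: "0 \<le> p" "p \<le> 1"
  shows "prob {\<omega> \<in> space M. (\<Sum>s<m. hit l (t0 + s) \<omega>) < p * m / 4} \<le> exp (- p * m / 8)"
proof -
  define c where "c = 1 - exp (-1::real)"
  have "exp (-1::real) \<le> 5/8"
    using exp_ge_add_one_self[of "1::real"] by (simp add: exp_minus field_simps)
  then have c: "3/8 \<le> c" "c * p \<le> 1" using p by (auto simp: c_def mult_le_one)
  define U where "U \<omega> = exp (- (\<Sum>s<m. hit l (t0 + s) \<omega>))" for \<omega>
  have U_prod: "U \<omega> = (\<Prod>s<m. exp (- hit l (t0 + s) \<omega>))" for \<omega>
    by (simp add: U_def exp_sum sum_negf[symmetric])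
  have [measurable]: "U \<in> borel_measurable M" unfolding U_def by measurable
  have U: "0 \<le> U \<omega>" "U \<omega> \<le> 1" for \<omega>
    by (auto simp: U_def intro!: sum_nonneg hit_nonneg)
  have int_U: "integrable M U"
    by (rule integrable_const_bound[where B=1]) (use U in \<open>auto simp: abs_le_iff\<close>)
  have "prob {\<omega> \<in> space M. (\<Sum>s<m. hit l (t0 + s) \<omega>) < p * m / 4}
      \<le> prob {\<omega> \<in> space M. exp (- p * m / 4) \<le> U \<omega>}"
    by (rule finite_measure_mono) (auto simp: U_def)
  also have "\<dots> \<le> (\<integral>\<omega>. U \<omega> \<partial>M) / exp (- p * m / 4)"
    by (rule integral_Markov_inequality_measure[OF int_U sets.top]) (auto simp: U)
  also have "\<dots> \<le> (1 - c * p) ^ m / exp (- p * m / 4)"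
    using integral_prod_exp_neg_hit_le[OF l p, of t0 m]
    by (intro divide_right_mono) (auto simp: U_prod c_def)
  also have "\<dots> \<le> exp (- c * p) ^ m / exp (- p * m / 4)"
    using c exp_ge_add_one_self[of "- c * p"] by (intro divide_right_mono power_mono) auto
  also have "\<dots> = exp (- (c * (p * m)) + p * m / 4)"
    by (simp add: exp_of_nat_mult[symmetric] exp_diff[symmetric] algebra_simps)
  also have "\<dots> \<le> exp (- p * m / 8)"
    using c(1) mult_right_mono[OF c(1), of "p * m"] p by simp
  finally show ?thesis .
qed

lemma prob_not_all_blocks_excited_le:
  fixes L :: "(real^'n) set"
  assumes L: "finite L" "\<And>l. l \<in> L \<Longrightarrow> norm l = 1"
    and net: "\<And>v. norm v = 1 \<Longrightarrow> \<exists>l\<in>L. norm (v - l) \<le> \<sigma> / (2 * b)"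
    and bnd: "AE \<omega> in M. \<forall>t. norm (z t \<omega>) \<le> b"
    and \<sigma>: "\<sigma> > 0" and b: "b > 0" and p: "0 \<le> p" "p \<le> 1" and m: "m \<ge> 1"
  shows "prob (space M - {\<omega> \<in> space M. \<forall>k \<le> K.
            loewner_ge ((1 / real m) *\<^sub>R (\<Sum>s = 1..m. outer (z (k * m + s) \<omega>)))
                       ((\<sigma> * p / 4)\<^sup>2 *\<^sub>R mat 1)})
         \<le> real (Suc K) * real (card L) * exp (- p * m / 8)"
    (is "prob (space M - ?good) \<le> _")
proof -
  define few where "few = (\<lambda>(k, l). {\<omega> \<in> space M. (\<Sum>s<m. hit l (k * m + s) \<omega>) < p * m / 4})"
  have few_sets: "few kl \<in> sets M" for kl unfolding few_def by (cases kl) simp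
  have "AE \<omega> in M. \<omega> \<in> space M - ?good \<longrightarrow> \<omega> \<in> (\<Union>kl \<in> {..K} \<times> L. few kl)"
    using bnd
  proof eventually_elim
    case (elim \<omega>)
    show ?case
    proof (rule impI, rule ccontr)
      assume "\<omega> \<in> space M - ?good" and "\<omega> \<notin> (\<Union>kl \<in> {..K} \<times> L. few kl)"
      then have \<omega>: "\<omega> \<in> space M" and many: "\<And>k l. k \<le> K \<Longrightarrow> l \<in> L \<Longrightarrow> \<omega> \<notin> few (k, l)"
        by auto
      have "loewner_ge ((1 / real m) *\<^sub>R (\<Sum>s = 1..m. outer (z (k * m + s) \<omega>)))
                       ((\<sigma> * p / 4)\<^sup>2 *\<^sub>R mat 1)" if k: "k \<le> K" for k
      proof (rule loewner_ge_block_of_net[OF m _ \<sigma> b p])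
        show "norm (z (k * m + s) \<omega>) \<le> b" for s using elim by blast
        fix u :: "real^'n" assume "norm u = 1"
        then obtain l where l: "l \<in> L" "norm (u - l) \<le> \<sigma> / (2 * b)" using net by blast
        have "p * m / 4 \<le> (\<Sum>s<m. hit l (k * m + s) \<omega>)"
          using many[OF k l(1)] \<omega> by (auto simp: few_def)
        then show "\<exists>l. norm (u - l) \<le> \<sigma> / (2 * b) \<and>
            p * m / 4 \<le> card {s \<in> {1..m}. \<sigma> \<le> \<bar>l \<bullet> z (k * m + s) \<omega>\<bar>}"
          using l(2) by (auto simp: sum_hit_eq_card[OF \<omega>])
      qed
      with \<omega> \<open>\<omega> \<in> space M - ?good\<close> show False by auto
    qed
  qed
  then have "prob (space M - ?good) \<le> prob (\<Union>kl \<in> {..K} \<times> L. few kl)"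
    by (rule finite_measure_mono_AE) (auto simp: few_sets L)
  also have "\<dots> \<le> (\<Sum>kl \<in> {..K} \<times> L. prob (few kl))"
    by (rule finite_measure_subadditive_finite) (auto simp: L few_sets)
  also have "\<dots> \<le> (\<Sum>kl \<in> {..K} \<times> L. exp (- p * m / 8))"
    using prob_few_hits_le[OF L(2) p] by (intro sum_mono) (auto simp: few_def split: prod.split)
  also have "\<dots> = real (Suc K) * real (card L) * exp (- p * m / 8)"
    by (simp add: card_cartesian_product algebra_simps)
  finally show ?thesis .
qed

end

theorem lemma1:
  fixes M :: "'a measure"
    and A :: "real^'nx^'nx" and B :: "real^'nu^'nx"
    and x :: "nat \<Rightarrow> 'a \<Rightarrow> real^'nx" and u :: "nat \<Rightarrow> 'a \<Rightarrow> real^'nu"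
    and w :: "nat \<Rightarrow> 'a \<Rightarrow> real^'nx"
    and z :: "nat \<Rightarrow> 'a \<Rightarrow> real^('nx + 'nu)"
    and \<sigma>z pz bz wmax :: real and m T :: nat
  assumes M: "prob_space M"
    and x_meas: "\<And>t. x t \<in> borel_measurable M"
    and u_meas: "\<And>t. u t \<in> borel_measurable M"
    and w_meas: "\<And>t. w t \<in> borel_measurable M"
    and z_def: "\<And>t \<omega>. z t \<omega> = stack (x t \<omega>) (u t \<omega>)"
    and dyn: "\<And>t \<omega>. \<omega> \<in> space M \<Longrightarrow> x (Suc t) \<omega> = A *v x t \<omega> + B *v u t \<omega> + w t \<omega>"
    and w_bdd: "\<And>t. AE \<omega> in M. infnorm (w t \<omega>) \<le> wmax"
    and w_indep: "prob_space.indep_vars M (\<lambda>_. borel) w UNIV"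
    and w_ident: "\<And>t. distr M borel (w t) = distr M borel (w 0)"
    and w_mean: "\<And>t. prob_space.expectation M (w t) = 0"
    and w_cov: "\<And>t. pos_def (\<chi> i j. prob_space.expectation M (\<lambda>\<omega>. w t \<omega> $ i * w t \<omega> $ j))"
    and \<sigma>z_pos: "\<sigma>z > 0" and pz: "0 < pz" "pz \<le> 1" and bz: "bz \<ge> 0"
    and A2_excite: "\<And>l t. norm (l :: real^('nx + 'nu)) = 1 \<Longrightarrow>
        AE \<omega> in M. real_cond_exp M (filt M w z t)
          (indicator {\<omega>' \<in> space M. \<bar>l \<bullet> z (Suc t) \<omega>'\<bar> \<ge> \<sigma>z}) \<omega> \<ge> pz"
    and A2_bdd: "\<And>t. AE \<omega> in M. norm (z t \<omega>) \<le> bz"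
    and m: "m \<ge> 1" and T: "T > m"
  shows "measure M (space M - {\<omega> \<in> space M. \<forall>k \<le> nat \<lceil>real T / real m\<rceil> - 1.
            loewner_ge ((1 / real m) *\<^sub>R (\<Sum>s = 1..m. outer (z (k * m + s) \<omega>)))
                       ((const_a1 \<sigma>z pz)^2 *\<^sub>R mat 1)})
         \<le> 544 * (real T / real m) * real CARD('nx + 'nu) powr 2.5
             * ln (const_a2 \<sigma>z pz bz * real CARD('nx + 'nu))
             * (const_a2 \<sigma>z pz bz) ^ CARD('nx + 'nu) * exp (- const_a3 pz * real m)"
proof -
  let ?n = "CARD('nx + 'nu)" and ?K = "nat \<lceil>real T / real m\<rceil> - 1"
  have z_meas: "z t \<in> borel_measurable M" for t
  proof -
    have "z t = (\<lambda>\<omega>. stack (x t \<omega>) (u t \<omega>))" by (rule ext) (rule z_def)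
    then show ?thesis using stack_measurable[OF x_meas u_meas] by simp
  qed
  interpret excited_process M z w \<sigma>z pz
    by (intro excited_process.intro excited_process_axioms.intro M z_meas w_meas A2_excite)
  have n: "1 \<le> ?n" using zero_less_card_finite[where 'a="'nx + 'nu"] by linarith
  have dim: "real ?n * \<sigma>z\<^sup>2 * pz \<le> bz\<^sup>2" by (rule card_mult_excitation_le_sq_bound[OF \<sigma>z_pos A2_bdd])
  have "0 < real ?n * \<sigma>z\<^sup>2 * pz" using n \<sigma>z_pos pz by simp
  with dim have bz_pos: "bz > 0" using bz by (cases "bz = 0") auto
  obtain L :: "(real^('nx + 'nu)) set" where L: "finite L" "\<forall>l\<in>L. norm l = 1"
      "real (card L) \<le> const_a2 \<sigma>z pz bz ^ ?n"
      "\<forall>v. norm v = 1 \<longrightarrow> (\<exists>l\<in>L. norm (v - l) \<le> \<sigma>z / (2 * bz))"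
    using exists_unit_sphere_net_card_le_const_a2[OF dim \<sigma>z_pos pz bz_pos] by blast
  have "measure M (space M - {\<omega> \<in> space M. \<forall>k \<le> ?K.
            loewner_ge ((1 / real m) *\<^sub>R (\<Sum>s = 1..m. outer (z (k * m + s) \<omega>)))
                       ((const_a1 \<sigma>z pz)^2 *\<^sub>R mat 1)})
        \<le> real (Suc ?K) * real (card L) * exp (- pz * m / 8)"
    unfolding const_a1_def
  proof (rule prob_not_all_blocks_excited_le[OF L(1) L(2)[rule_format] L(4)[rule_format]])
    show "AE \<omega> in M. \<forall>t. norm (z t \<omega>) \<le> bz" by (simp add: AE_all_countable A2_bdd)
  qed (use \<sigma>z_pos bz_pos pz m in auto)
  also have "\<dots> \<le> 544 * (real T / real m) * real ?n powr 2.5 * ln (const_a2 \<sigma>z pz bz * real ?n)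
                   * const_a2 \<sigma>z pz bz ^ ?n * exp (- const_a3 pz * real m)"
    by (rule block_union_bound_le_rate[OF m T n const_a2_ge_64[OF dim n \<sigma>z_pos pz] _ L(3) pz]) simp
  finally show ?thesis .
qed

end
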